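(* Let $k$ be a field of characteristic zero, $S=k[x_1,x_2,x_3]$, and $(S,L)$ a triangularizable Lie–Rinehart algebra with basis $\alpha_1,\alpha_2,\alpha_3$ satisfying the Bézout condition, with enveloping algebra $U$. Let $\{f_l^i:i\in\{1,2\},l\in\{1,2,3\}\}\subset S$ and $\omega=\sum_{l=1}^3(f_l^2\alpha_2+f_l^1\alpha_1)\hat x_l\in\mathcal{X}^1$. If $\omega$ is a cocycle, then there exist unique $g_{11},g_{12},g_{22}\in S$ with $g_{11}\alpha_1(x_1)=f_1^1$, $g_{12}\alpha_1(x_1)=f_1^2$ and $g_{22}\alpha_2(x_2)=f_2^2-g_{12}\alpha_1(x_2)$, and these satisfy $$\omega\equiv d^0\big(\tfrac12g_{11}\alpha_1^2+g_{12}\alpha_2\alpha_1+\tfrac12g_{22}\alpha_2^2\big)\pmod{F_0\mathcal{X}^1}.$$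
   Context: Triangularizable: $L\subseteq\operatorname{Der}(S)$ an $S$-submodule and Lie subalgebra, free with basis of derivations $\alpha_1,\alpha_2,\alpha_3$, $\alpha_i(x_j)=0$ for $i>j$, $\alpha_1(x_1)\alpha_2(x_2)\alpha_3(x_3)\ne0$. Bézout: $\alpha_2(x_2),\alpha_2(x_3)$ coprime and $\alpha_1(x_1)$ coprime with $\alpha_1(x_2)\alpha_2(x_3)-\alpha_2(x_2)\alpha_1(x_3)$. In $U$, $[\alpha,s]=\alpha(s)$ for $\alpha\in L,s\in S$. $\mathcal{X}^q=U\otimes_k\operatorname{Hom}_k(\Lambda^qW,k)$ with $W=\operatorname{span}(x_1,x_2,x_3)$ and dual basis $\hat x_l$; $d^0(u)=\sum_k[u,x_k]\hat x_k$ and $d^1(\sum_ku_k\hat x_k)=\sum_{k<l}([u_k,x_l]-[u_l,x_k])\hat x_k\wedge\hat x_l$; $\omega$ is a cocycle if $d^1\omega=0$. $F_0\mathcal{X}^1=S\hat x_1\oplus S\hat x_2\oplus S\hat x_3$. *)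

theory Defs
  imports "HOL-Computational_Algebra.Polynomial"
begin

text \<open>The polynomial ring S = k[x1,x2,x3] is modelled as k[x1][x2][x3], i.e. the type
  'k poly poly poly; x3 is the outermost variable, x1 the innermost one.\<close>

definition Xv :: "nat \<Rightarrow> 'k::comm_ring_1 poly poly poly" where
  "Xv i = (if i = 1 then [:[:[:0, 1:]:]:] else if i = 2 then [:[:0, 1:]:] else [:0, 1:])"

definition cst :: "'k::comm_ring_1 \<Rightarrow> 'k poly poly poly" where
  "cst c = [:[:[:c:]:]:]"

definition is_kder :: "('k::comm_ring_1 poly poly poly \<Rightarrow> 'k poly poly poly) \<Rightarrow> bool" where
  "is_kder D \<longleftrightarrow> (\<forall>a b. D (a + b) = D a + D b) \<and> (\<forall>c a. D (cst c * a) = cst c * D a)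
     \<and> (\<forall>a b. D (a * b) = a * D b + b * D a)"

definition span3 :: "('s::comm_ring_1 \<Rightarrow> 's) \<Rightarrow> ('s \<Rightarrow> 's) \<Rightarrow> ('s \<Rightarrow> 's) \<Rightarrow> ('s \<Rightarrow> 's) set" where
  "span3 a1 a2 a3 = {D. \<exists>s1 s2 s3. D = (\<lambda>f. s1 * a1 f + s2 * a2 f + s3 * a3 f)}"

definition triangularizable ::
  "('k::comm_ring_1 poly poly poly \<Rightarrow> 'k poly poly poly) \<Rightarrow> ('k poly poly poly \<Rightarrow> 'k poly poly poly)
   \<Rightarrow> ('k poly poly poly \<Rightarrow> 'k poly poly poly) \<Rightarrow> bool" where
  "triangularizable a1 a2 a3 \<longleftrightarrow>
     is_kder a1 \<and> is_kder a2 \<and> is_kder a3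
   \<and> (\<forall>D \<in> span3 a1 a2 a3. \<forall>E \<in> span3 a1 a2 a3. (\<lambda>f. D (E f) - E (D f)) \<in> span3 a1 a2 a3)
   \<and> (\<forall>s1 s2 s3. (\<lambda>f. s1 * a1 f + s2 * a2 f + s3 * a3 f) = (\<lambda>f. 0) \<longrightarrow> s1 = 0 \<and> s2 = 0 \<and> s3 = 0)
   \<and> a2 (Xv 1) = 0 \<and> a3 (Xv 1) = 0 \<and> a3 (Xv 2) = 0
   \<and> a1 (Xv 1) * a2 (Xv 2) * a3 (Xv 3) \<noteq> 0"

definition bezout_cond ::
  "('k::field poly poly poly \<Rightarrow> 'k poly poly poly) \<Rightarrow> ('k poly poly poly \<Rightarrow> 'k poly poly poly) \<Rightarrow> bool" where
  "bezout_cond a1 a2 \<longleftrightarrow>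
     coprime (a2 (Xv 2)) (a2 (Xv 3))
   \<and> coprime (a1 (Xv 1)) (a1 (Xv 2) * a2 (Xv 3) - a2 (Xv 2) * a1 (Xv 3))"

definition brk :: "'u::ring_1 \<Rightarrow> 'u \<Rightarrow> 'u" where
  "brk a b = a * b - b * a"

definition pbw_mon :: "'u::ring_1 \<Rightarrow> 'u \<Rightarrow> 'u \<Rightarrow> nat \<times> nat \<times> nat \<Rightarrow> 'u" where
  "pbw_mon A1 A2 A3 m = (case m of (p, q, r) \<Rightarrow> A1 ^ p * A2 ^ q * A3 ^ r)"

text \<open>U (with structure maps iota : S -> U and j : L -> U) is the enveloping algebra of the
  Lie-Rinehart algebra (S, L), L = span3 a1 a2 a3: the defining relations hold and the
  ordered monomials in the basis form a left S-basis of U (PBW).\<close>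
definition is_env_alg ::
  "('s::comm_ring_1 \<Rightarrow> 'u::ring_1) \<Rightarrow> (('s \<Rightarrow> 's) \<Rightarrow> 'u) \<Rightarrow> ('s \<Rightarrow> 's) \<Rightarrow> ('s \<Rightarrow> 's) \<Rightarrow> ('s \<Rightarrow> 's) \<Rightarrow> bool" where
  "is_env_alg \<iota> j a1 a2 a3 \<longleftrightarrow>
     \<iota> 1 = 1 \<and> (\<forall>a b. \<iota> (a + b) = \<iota> a + \<iota> b) \<and> (\<forall>a b. \<iota> (a * b) = \<iota> a * \<iota> b)
   \<and> (\<forall>D \<in> span3 a1 a2 a3. \<forall>E \<in> span3 a1 a2 a3. j (\<lambda>f. D f + E f) = j D + j E)
   \<and> (\<forall>s. \<forall>D \<in> span3 a1 a2 a3. j (\<lambda>f. s * D f) = \<iota> s * j D)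
   \<and> (\<forall>D \<in> span3 a1 a2 a3. \<forall>E \<in> span3 a1 a2 a3. j (\<lambda>f. D (E f) - E (D f)) = brk (j D) (j E))
   \<and> (\<forall>D \<in> span3 a1 a2 a3. \<forall>s. brk (j D) (\<iota> s) = \<iota> (D s))
   \<and> (\<forall>u. \<exists>!c. finite {m. c m \<noteq> 0} \<and>
          u = (\<Sum>m \<in> {m. c m \<noteq> 0}. \<iota> (c m) * pbw_mon (j a1) (j a2) (j a3) m))"

text \<open>Cochains in X^1 are represented by their coefficient functions k \<mapsto> u_k, k = 1,2,3.\<close>
definition d0 :: "('k::comm_ring_1 poly poly poly \<Rightarrow> 'u::ring_1) \<Rightarrow> 'u \<Rightarrow> nat \<Rightarrow> 'u" where
  "d0 \<iota> u = (\<lambda>k. brk u (\<iota> (Xv k)))"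

definition is_cocycle1 :: "('k::comm_ring_1 poly poly poly \<Rightarrow> 'u::ring_1) \<Rightarrow> (nat \<Rightarrow> 'u) \<Rightarrow> bool" where
  "is_cocycle1 \<iota> \<omega> \<longleftrightarrow>
     (\<forall>k l. 1 \<le> k \<and> k < l \<and> l \<le> 3 \<longrightarrow> brk (\<omega> k) (\<iota> (Xv l)) - brk (\<omega> l) (\<iota> (Xv k)) = 0)"

text \<open>Congruence modulo F_0 X^1 = S xhat_1 + S xhat_2 + S xhat_3.\<close>
definition cong_F0 :: "('s::comm_ring_1 \<Rightarrow> 'u::ring_1) \<Rightarrow> (nat \<Rightarrow> 'u) \<Rightarrow> (nat \<Rightarrow> 'u) \<Rightarrow> bool" where
  "cong_F0 \<iota> \<omega> \<eta> \<longleftrightarrow> (\<forall>k \<in> {1, 2, 3}. \<omega> k - \<eta> k \<in> range \<iota>)"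

end

theory Submission
  imports
    Defs
    "HOL-Computational_Algebra.Polynomial_Factorial"
    "HOL-Computational_Algebra.Field_as_Ring"
begin

(* Since [alpha, s] = alpha(s) in U and iota is injective by PBW, the cocycle condition says that
   the pairing F_k . v_l = f_k^1 alpha_1(x_l) + f_k^2 alpha_2(x_l) is symmetric in k and l, where
   F_k = (f_k^1, f_k^2) and v_l = (alpha_1(x_l), alpha_2(x_l)). Because v_1 = (alpha_1(x_1), 0),
   the Bezout condition lets one divide successively by alpha_1(x_1) and alpha_2(x_2) in the
   factorial ring S, which yields a symmetric matrix G = (g_ij) with F_l = G v_l for l = 1, 2, 3.
   The commutator of Q = 1/2 g11 alpha_1^2 + g12 alpha_2 alpha_1 + 1/2 g22 alpha_2^2 with x_l is
   (G v_l) . (alpha_1, alpha_2) plus an element of S, so omega - d^0 Q lies in F_0. *)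

(* Gcd-based facts about k[x1,x2,x3] need a coefficient field of class field_gcd; the fraction
   field of k is an isomorphic copy of k that can be made one. *)
instantiation fract :: (idom)
  "{unique_euclidean_ring, normalization_euclidean_semiring, normalization_semidom_multiplicative}"
begin

definition [simp]: "normalize_fract = (normalize_field :: 'a fract \<Rightarrow> _)"
definition [simp]: "unit_factor_fract = (unit_factor_field :: 'a fract \<Rightarrow> _)"
definition [simp]: "modulo_fract = (mod_field :: 'a fract \<Rightarrow> _)"
definition [simp]: "euclidean_size_fract = (euclidean_size_field :: 'a fract \<Rightarrow> _)"
definition [simp]: "division_segment (x :: 'a fract) = 1"

instance
  by standard
    (simp_all add: dvd_field_iff field_split_simps split: if_splits)

end

instantiation fract :: (idom) euclidean_ring_gcd
begin

definition gcd_fract :: "'a fract \<Rightarrow> 'a fract \<Rightarrow> 'a fract" where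
  "gcd_fract = Euclidean_Algorithm.gcd"
definition lcm_fract :: "'a fract \<Rightarrow> 'a fract \<Rightarrow> 'a fract" where
  "lcm_fract = Euclidean_Algorithm.lcm"
definition Gcd_fract :: "'a fract set \<Rightarrow> 'a fract" where
  "Gcd_fract = Euclidean_Algorithm.Gcd"
definition Lcm_fract :: "'a fract set \<Rightarrow> 'a fract" where
  "Lcm_fract = Euclidean_Algorithm.Lcm"

instance by standard (simp_all add: gcd_fract_def lcm_fract_def Gcd_fract_def Lcm_fract_def)

end

instance fract :: (idom) field_gcd ..

definition ring_iso :: "('a::comm_ring_1 \<Rightarrow> 'b::comm_ring_1) \<Rightarrow> bool" where
  "ring_iso h \<longleftrightarrow>
     bij h \<and> h 1 = 1 \<and> (\<forall>x y. h (x + y) = h x + h y) \<and> (\<forall>x y. h (x * y) = h x * h y)"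

lemma ring_iso_zero: "ring_iso h \<Longrightarrow> h 0 = 0"
  unfolding ring_iso_def by (metis add_0 add_cancel_right_right)

lemma ring_iso_map_poly:
  assumes "ring_iso h"
  shows "ring_iso (map_poly h)"
proof -
  have h0: "h 0 = 0" and h1: "h 1 = 1" and bij: "bij h"
    and add: "\<And>x y. h (x + y) = h x + h y" and mult: "\<And>x y. h (x * y) = h x * h y"
    using assms ring_iso_zero unfolding ring_iso_def by auto
  have inv0: "inv h 0 = 0"
    using inv_f_f[OF bij_is_inj[OF bij], of 0] h0 by simp
  have "bij (map_poly h)"
  proof (rule o_bij)
    show "map_poly (inv h) \<circ> map_poly h = id" "map_poly h \<circ> map_poly (inv h) = id"
      using bij by (auto simp: fun_eq_iff map_poly_map_poly h0 inv0 o_def bij_is_inj bij_is_surj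
          surj_f_inv_f)
  qed
  moreover have map_add: "map_poly h (p + q) = map_poly h p + map_poly h q" for p q
    by (rule poly_eqI) (simp add: coeff_map_poly h0 add)
  moreover have "map_poly h (p * q) = map_poly h p * map_poly h q" for p q
  proof (induction p rule: pCons_induct)
    case (pCons a p)
    then show ?case
      by (simp add: map_add map_poly_pCons map_poly_smult h0 mult)
  qed simp
  ultimately show ?thesis
    unfolding ring_iso_def using h1 by simp
qed

lemma ring_iso_dvd_iff:
  assumes "ring_iso h"
  shows "h a dvd h b \<longleftrightarrow> a dvd b"
proof
  assume "h a dvd h b"
  then obtain k where "h b = h a * k" by (elim dvdE)
  moreover obtain k' where "k = h k'"
    using assms unfolding ring_iso_def by (metis bij_pointE)
  ultimately have "h b = h (a * k')"
    using assms unfolding ring_iso_def by simp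
  then have "b = a * k'"
    using assms unfolding ring_iso_def by (meson bij_is_inj injD)
  then show "a dvd b" ..
next
  assume "a dvd b"
  then show "h a dvd h b"
    using assms unfolding ring_iso_def by auto
qed

lemma ring_iso_coprime:
  assumes "ring_iso h" and "coprime a b"
  shows "coprime (h a) (h b)"
proof (rule coprimeI)
  fix d
  assume "d dvd h a" "d dvd h b"
  moreover obtain d' where d': "d = h d'"
    using assms(1) unfolding ring_iso_def by (metis bij_pointE)
  ultimately have "is_unit d'"
    using assms by (simp add: ring_iso_dvd_iff coprime_common_divisor)
  then show "is_unit d"
    using ring_iso_dvd_iff[OF assms(1), of d' 1] assms(1) d' unfolding ring_iso_def by simp
qed

lemma ring_iso_coprime_dvd_mult_left:
  fixes h :: "'a::{comm_ring_1,algebraic_semidom} \<Rightarrow> 'b::{comm_ring_1,semiring_gcd}"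
    and a b c :: 'a
  assumes "ring_iso h" and "coprime a b" and "a dvd c * b"
  shows "a dvd c"
proof -
  have "h a dvd h c * h b"
    using assms(1,3) ring_iso_dvd_iff[OF assms(1), of a "c * b"] unfolding ring_iso_def by simp
  then have "h a dvd h c"
    using ring_iso_coprime[OF assms(1,2)] by (simp add: coprime_dvd_mult_left_iff)
  then show ?thesis
    using ring_iso_dvd_iff[OF assms(1)] by blast
qed

lemma ring_iso_to_fract: "ring_iso (to_fract :: 'k::field \<Rightarrow> 'k fract)"
proof -
  have "x \<in> range to_fract" for x :: "'k fract"
  proof (cases x)
    case (Fract a b)
    then have "x = to_fract a / to_fract b"
      by (simp add: Fract_conv_to_fract)
    also have "\<dots> = to_fract (a / b)"
      by (cases "b = 0") (simp_all add: divide_eq_eq flip: to_fract_mult)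
    finally show ?thesis by blast
  qed
  then have "bij (to_fract :: 'k \<Rightarrow> 'k fract)"
    by (auto intro!: bijI injI)
  then show ?thesis
    unfolding ring_iso_def by simp
qed

lemma trivariate_coprime_dvd_mult_left:
  fixes a b c :: "'k::field poly poly poly"
  assumes "coprime a b" and "a dvd c * b"
  shows "a dvd c"
  by (rule ring_iso_coprime_dvd_mult_left[OF _ assms, of "map_poly (map_poly (map_poly to_fract))"])
    (intro ring_iso_map_poly ring_iso_to_fract)

(* With a = alpha_1(x_1), p, q = alpha_1(x_2), alpha_1(x_3), r, t = alpha_2(x_2), alpha_2(x_3) and
   f_il = f_l^i, the equations e_kl are the cocycle condition and the conclusion is F_l = G v_l. *)
lemma symmetric_solution_first_column:
  fixes a p q r t f11 f12 f13 f21 :: "'a::idom"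
  assumes "a \<noteq> 0"
    and cancel: "\<And>c. a dvd c * (p * t - r * q) \<Longrightarrow> a dvd c"
    and e12: "f21 * r + f11 * p = f12 * a"
    and e13: "f21 * t + f11 * q = f13 * a"
  obtains g11 g12 where "f11 = g11 * a" "f21 = g12 * a"
    "f12 = g11 * p + g12 * r" "f13 = g11 * q + g12 * t"
proof -
  have "f11 * (p * t - r * q) = a * (f12 * t - f13 * r)"
    using e12 e13 by algebra
  then obtain g11 where g11: "f11 = g11 * a"
    using cancel[of f11] by (metis dvd_triv_left dvdE mult.commute)
  have "f21 * (p * t - r * q) = a * (f13 * p - f12 * q)"
    using e12 e13 by algebra
  then obtain g12 where g12: "f21 = g12 * a"
    using cancel[of f21] by (metis dvd_triv_left dvdE mult.commute)
  have "f12 * a = (g11 * p + g12 * r) * a" "f13 * a = (g11 * q + g12 * t) * a"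
    using e12 e13 unfolding g11 g12 by algebra+
  with \<open>a \<noteq> 0\<close> have "f12 = g11 * p + g12 * r" "f13 = g11 * q + g12 * t"
    by simp_all
  with g11 g12 that show thesis by blast
qed

lemma symmetric_matrix_solution:
  fixes a p q r t f11 f12 f13 f21 f22 f23 :: "'a::idom"
  assumes "a \<noteq> 0" "r \<noteq> 0"
    and cancel_a: "\<And>c. a dvd c * (p * t - r * q) \<Longrightarrow> a dvd c"
    and cancel_r: "\<And>c. r dvd c * t \<Longrightarrow> r dvd c"
    and e12: "f21 * r + f11 * p = f12 * a"
    and e13: "f21 * t + f11 * q = f13 * a"
    and e23: "f22 * t + f12 * q = f23 * r + f13 * p"
  obtains g11 g12 g22 where
    "f11 = g11 * a" "f21 = g12 * a"
    "f12 = g11 * p + g12 * r" "f22 = g12 * p + g22 * r"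
    "f13 = g11 * q + g12 * t" "f23 = g12 * q + g22 * t"
proof -
  obtain g11 g12 where g: "f11 = g11 * a" "f21 = g12 * a"
      "f12 = g11 * p + g12 * r" "f13 = g11 * q + g12 * t"
    using symmetric_solution_first_column[OF \<open>a \<noteq> 0\<close> cancel_a e12 e13] by blast
  have "(f22 - g12 * p) * t = r * (f23 - g12 * q)"
    using e23 by (simp add: g algebra_simps)
  then obtain g22 where g22: "f22 - g12 * p = r * g22"
    using cancel_r[of "f22 - g12 * p"] by (metis dvd_triv_left dvdE)
  have "r * f23 = r * (g12 * q + g22 * t)"
    using e23 g22 unfolding g by algebra
  with \<open>r \<noteq> 0\<close> have "f23 = g12 * q + g22 * t"
    by simp
  moreover have "f22 = g12 * p + g22 * r"
    using g22 by (simp add: algebra_simps)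
  ultimately show thesis
    using g that by blast
qed

lemma brk_add_left: "brk (a + b) c = brk a c + brk b (c::'u::ring_1)"
  by (simp add: brk_def algebra_simps)

lemma brk_eq_iff_commute: "brk a b = c \<longleftrightarrow> a * b = b * a + c"
  by (auto simp: brk_def algebra_simps)

context
  fixes I :: "'s::comm_ring_1 \<Rightarrow> 'u::ring_1"
  assumes I_add: "\<And>a b. I (a + b) = I a + I b"
    and I_mult: "\<And>a b. I (a * b) = I a * I b"
begin

lemma I_uminus: "I (- u) = - I u"
proof -
  have "I 0 = 0"
    using I_add[of 0 0] by simp
  then have "I (- u) + I u = 0"
    by (simp flip: I_add)
  then show ?thesis
    by (simp add: eq_neg_iff_add_eq_0)
qed

lemma brk_scalar_mult_left:
  assumes gen_A: "\<And>t. brk A (I t) = I (D t)"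
  shows "brk (I f * A) (I x) = I (f * D x)"
proof -
  have "I x * I f = I f * I x"
    by (metis I_mult mult.commute)
  then have "brk (I f * A) (I x) = I f * brk A (I x)"
    by (simp add: brk_def algebra_simps flip: mult.assoc)
  then show ?thesis
    by (simp add: gen_A I_mult)
qed

lemma brk_scalar_mult_mult_left:
  assumes gen_A: "\<And>t. brk A (I t) = I (D t)"
    and gen_B: "\<And>t. brk B (I t) = I (E t)"
  shows "brk (I s * A * B) (I x) = I (s * E x) * A + I (s * D x) * B + I (s * D (E x))"
proof -
  have A': "A * I t = I t * A + I (D t)" and B': "B * I t = I t * B + I (E t)" for t
    using gen_A gen_B by (simp_all add: brk_eq_iff_commute)
  have AB: "A * B * I x = I x * A * B + I (D x) * B + I (E x) * A + I (D (E x))"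
    by (simp add: mult.assoc B' distrib_left) (simp add: A' algebra_simps flip: mult.assoc)
  have sw: "I x * I s = I s * I x"
    by (metis I_mult mult.commute)
  have "brk (I s * A * B) (I x) = I s * (A * B * I x) - I s * I x * A * B"
    by (simp add: brk_def sw flip: mult.assoc)
  also have "\<dots> = I s * I (E x) * A + I s * I (D x) * B + I s * I (D (E x))"
    unfolding AB by (simp add: algebra_simps)
  finally show ?thesis
    by (simp add: I_mult)
qed

lemma brk_quadratic_mod_range:
  assumes gen_A: "\<And>t. brk A (I t) = I (D t)"
    and gen_B: "\<And>t. brk B (I t) = I (E t)"
    and half: "c + c = 1"
  shows "I (g12 * D x + g22 * E x) * B + I (g11 * D x + g12 * E x) * A
           - brk (I (c * g11) * A ^ 2 + I g12 * B * A + I (c * g22) * B ^ 2) (I x) \<in> range I"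
proof -
  define r where "r = c * g11 * D (D x) + g12 * E (D x) + c * g22 * E (E x)"
  have sq: "I s * X ^ 2 = I s * X * X" for s X
    by (simp add: power2_eq_square mult.assoc)
  have "brk (I (c * g11) * A ^ 2 + I g12 * B * A + I (c * g22) * B ^ 2) (I x)
      = I ((c + c) * g11 * D x + g12 * E x) * A + I (g12 * D x + (c + c) * g22 * E x) * B + I r"
    unfolding sq brk_add_left r_def
      brk_scalar_mult_mult_left[OF gen_A gen_A] brk_scalar_mult_mult_left[OF gen_B gen_A]
      brk_scalar_mult_mult_left[OF gen_B gen_B]
    by (simp only: I_add distrib_right add_ac)
  also have "\<dots> = I (g11 * D x + g12 * E x) * A + I (g12 * D x + g22 * E x) * B + I r"
    by (simp add: half)
  finally have "I (g12 * D x + g22 * E x) * B + I (g11 * D x + g12 * E x) * A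
      - brk (I (c * g11) * A ^ 2 + I g12 * B * A + I (c * g22) * B ^ 2) (I x) = - I r"
    by (simp add: algebra_simps)
  also have "- I r = I (- r)"
    by (rule I_uminus[symmetric])
  finally show ?thesis
    by (rule ssubst) (rule rangeI)
qed

end

lemma cst_add: "cst (a + b) = cst a + cst b"
  by (simp add: cst_def)

lemma cst_half: "cst (1 / 2 :: 'k::field_char_0) + cst (1 / 2) = 1"
  by (simp add: one_pCons cst_def flip: cst_add)

lemma basis_mem_span3: "a1 \<in> span3 a1 a2 a3" "a2 \<in> span3 a1 a2 a3"
  unfolding span3_def
  by (rule CollectI, rule exI[of _ 1], rule exI[of _ 0], rule exI[of _ 0], simp)
    (rule CollectI, rule exI[of _ 0], rule exI[of _ 1], rule exI[of _ 0], simp)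

lemma
  assumes "is_env_alg \<iota> j a1 a2 a3"
  shows is_env_alg_add: "\<iota> (a + b) = \<iota> a + \<iota> b"
    and is_env_alg_mult: "\<iota> (a * b) = \<iota> a * \<iota> b"
    and is_env_alg_brk_a1: "brk (j a1) (\<iota> s) = \<iota> (a1 s)"
    and is_env_alg_brk_a2: "brk (j a2) (\<iota> s) = \<iota> (a2 s)"
  using assms unfolding is_env_alg_def by (simp_all add: basis_mem_span3)

lemma is_env_alg_inj:
  assumes env: "is_env_alg \<iota> j a1 a2 a3"
  shows "inj \<iota>"
proof (rule injI)
  define c :: "'a \<Rightarrow> nat \<times> nat \<times> nat \<Rightarrow> 'a"
    where "c s m = (if m = (0, 0, 0) then s else 0)" for s m
  define rep where "rep u c \<longleftrightarrow> finite {m. c m \<noteq> 0}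
      \<and> u = (\<Sum>m \<in> {m. c m \<noteq> 0}. \<iota> (c m) * pbw_mon (j a1) (j a2) (j a3) m)" for u c
  have "\<iota> 0 = 0"
    using is_env_alg_add[OF env, of 0 0] by simp
  then have rep_scalar: "rep (\<iota> s) (c s)" for s
    by (cases "s = 0") (auto simp: rep_def c_def pbw_mon_def)
  have "\<exists>!c. rep u c" for u
    using env unfolding is_env_alg_def rep_def by (elim conjE) (erule spec)
  then have rep_unique: "rep u c1 \<Longrightarrow> rep u c2 \<Longrightarrow> c1 = c2" for u c1 c2
    by blast
  fix s t
  assume "\<iota> s = \<iota> t"
  then have "rep (\<iota> s) (c t)"
    using rep_scalar[of t] by simp
  then have "c s = c t"
    by (rule rep_unique[OF rep_scalar])
  then have "c s (0, 0, 0) = c t (0, 0, 0)"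
    by simp
  then show "s = t"
    by (simp add: c_def)
qed

lemma cocycle_coefficients_symmetric:
  assumes env: "is_env_alg \<iota> j a1 a2 a3"
    and coc: "is_cocycle1 \<iota> (\<lambda>l. \<iota> (f2 l) * j a2 + \<iota> (f1 l) * j a1)"
    and "1 \<le> k" "k < l" "l \<le> 3"
  shows "f2 k * a2 (Xv l) + f1 k * a1 (Xv l) = f2 l * a2 (Xv k) + f1 l * a1 (Xv k)"
proof -
  note add = is_env_alg_add[OF env] and mult = is_env_alg_mult[OF env]
  have "brk (\<iota> f * j a2 + \<iota> g * j a1) (\<iota> x) = \<iota> (f * a2 x + g * a1 x)" for f g x
    using brk_scalar_mult_left[where I = \<iota>, OF add mult]
    by (simp add: add brk_add_left is_env_alg_brk_a1[OF env] is_env_alg_brk_a2[OF env])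
  then have "\<iota> (f2 k * a2 (Xv l) + f1 k * a1 (Xv l)) = \<iota> (f2 l * a2 (Xv k) + f1 l * a1 (Xv k))"
    using coc[unfolded is_cocycle1_def, rule_format, of k l] assms(3-5) by simp
  then show ?thesis
    using is_env_alg_inj[OF env] by (simp add: inj_eq)
qed

lemma cocycle_symmetric_matrix:
  fixes \<iota> :: "'k::field poly poly poly \<Rightarrow> 'u::ring_1"
  assumes tri: "triangularizable a1 a2 a3"
    and bez: "bezout_cond a1 a2"
    and env: "is_env_alg \<iota> j a1 a2 a3"
    and coc: "is_cocycle1 \<iota> (\<lambda>l. \<iota> (f2 l) * j a2 + \<iota> (f1 l) * j a1)"
  obtains g11 g12 g22 where
    "\<And>l. l \<in> {1, 2, 3} \<Longrightarrow> f1 l = g11 * a1 (Xv l) + g12 * a2 (Xv l)"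
    "\<And>l. l \<in> {1, 2, 3} \<Longrightarrow> f2 l = g12 * a1 (Xv l) + g22 * a2 (Xv l)"
proof -
  have a21: "a2 (Xv 1) = 0" and nz: "a1 (Xv 1) \<noteq> 0" "a2 (Xv 2) \<noteq> 0"
    using tri unfolding triangularizable_def by auto
  have cancel: "\<And>c. a1 (Xv 1) dvd c * (a1 (Xv 2) * a2 (Xv 3) - a2 (Xv 2) * a1 (Xv 3))
      \<Longrightarrow> a1 (Xv 1) dvd c"
    "\<And>c. a2 (Xv 2) dvd c * a2 (Xv 3) \<Longrightarrow> a2 (Xv 2) dvd c"
    using bez unfolding bezout_cond_def by (auto intro: trivariate_coprime_dvd_mult_left)
  \<comment> \<open>Resolving \<open>env\<close> before \<open>coc\<close> fixes \<iota>, so that unifying \<open>coc\<close> stays first-order.\<close>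
  have eqs: "f2 1 * a2 (Xv 2) + f1 1 * a1 (Xv 2) = f1 2 * a1 (Xv 1)"
    "f2 1 * a2 (Xv 3) + f1 1 * a1 (Xv 3) = f1 3 * a1 (Xv 1)"
    "f2 2 * a2 (Xv 3) + f1 2 * a1 (Xv 3) = f2 3 * a2 (Xv 2) + f1 3 * a1 (Xv 2)"
    using cocycle_coefficients_symmetric[OF env, OF coc, of 1 2]
      cocycle_coefficients_symmetric[OF env, OF coc, of 1 3]
      cocycle_coefficients_symmetric[OF env, OF coc, of 2 3] a21
    by simp_all
  obtain g11 g12 g22 where g:
    "f1 1 = g11 * a1 (Xv 1)" "f2 1 = g12 * a1 (Xv 1)"
    "f1 2 = g11 * a1 (Xv 2) + g12 * a2 (Xv 2)" "f2 2 = g12 * a1 (Xv 2) + g22 * a2 (Xv 2)"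
    "f1 3 = g11 * a1 (Xv 3) + g12 * a2 (Xv 3)" "f2 3 = g12 * a1 (Xv 3) + g22 * a2 (Xv 3)"
    by (rule symmetric_matrix_solution[OF nz cancel eqs])
  show thesis
    by (rule that) (auto simp: g a21 simp del: One_nat_def)
qed

lemma cong_F0_d0_quadratic:
  fixes \<iota> :: "'k::field_char_0 poly poly poly \<Rightarrow> 'u::ring_1"
  assumes env: "is_env_alg \<iota> j a1 a2 a3"
    and G1: "\<And>l. l \<in> {1, 2, 3} \<Longrightarrow> f1 l = g11 * a1 (Xv l) + g12 * a2 (Xv l)"
    and G2: "\<And>l. l \<in> {1, 2, 3} \<Longrightarrow> f2 l = g12 * a1 (Xv l) + g22 * a2 (Xv l)"
  shows "cong_F0 \<iota> (\<lambda>l. \<iota> (f2 l) * j a2 + \<iota> (f1 l) * j a1)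
           (d0 \<iota> (\<iota> (cst (1/2) * g11) * j a1 ^ 2 + \<iota> g12 * j a2 * j a1
                  + \<iota> (cst (1/2) * g22) * j a2 ^ 2))"
  unfolding cong_F0_def d0_def
  using brk_quadratic_mod_range
      [where I = \<iota> and A = "j a1" and D = a1 and B = "j a2" and E = a2,
      OF is_env_alg_add[OF env] is_env_alg_mult[OF env]
      is_env_alg_brk_a1[OF env] is_env_alg_brk_a2[OF env] cst_half]
  by (simp add: G1 G2)

theorem lemma4p1:
  fixes \<iota> :: "'k::field_char_0 poly poly poly \<Rightarrow> 'u::ring_1"
    and j :: "('k poly poly poly \<Rightarrow> 'k poly poly poly) \<Rightarrow> 'u"
    and a1 a2 a3 :: "'k poly poly poly \<Rightarrow> 'k poly poly poly"
    and f1 f2 :: "nat \<Rightarrow> 'k poly poly poly"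
  assumes tri: "triangularizable a1 a2 a3"
    and bez: "bezout_cond a1 a2"
    and env: "is_env_alg \<iota> j a1 a2 a3"
    and coc: "is_cocycle1 \<iota> (\<lambda>l. \<iota> (f2 l) * j a2 + \<iota> (f1 l) * j a1)"
  shows "(\<exists>!(g11, g12, g22). g11 * a1 (Xv 1) = f1 1 \<and> g12 * a1 (Xv 1) = f2 1
            \<and> g22 * a2 (Xv 2) = f2 2 - g12 * a1 (Xv 2))
       \<and> (\<forall>g11 g12 g22. g11 * a1 (Xv 1) = f1 1 \<and> g12 * a1 (Xv 1) = f2 1
            \<and> g22 * a2 (Xv 2) = f2 2 - g12 * a1 (Xv 2) \<longrightarrow>
            cong_F0 \<iota> (\<lambda>l. \<iota> (f2 l) * j a2 + \<iota> (f1 l) * j a1)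
              (d0 \<iota> (\<iota> (cst (1/2) * g11) * j a1 ^ 2 + \<iota> g12 * j a2 * j a1
                     + \<iota> (cst (1/2) * g22) * j a2 ^ 2)))"
proof -
  obtain g11 g12 g22 where
    G1: "\<And>l. l \<in> {1, 2, 3} \<Longrightarrow> f1 l = g11 * a1 (Xv l) + g12 * a2 (Xv l)" and
    G2: "\<And>l. l \<in> {1, 2, 3} \<Longrightarrow> f2 l = g12 * a1 (Xv l) + g22 * a2 (Xv l)"
    using cocycle_symmetric_matrix[OF tri bez env, OF coc] by blast
  have "a2 (Xv 1) = 0" "a1 (Xv 1) \<noteq> 0" "a2 (Xv 2) \<noteq> 0"
    using tri unfolding triangularizable_def by auto
  then have defining_eqs_iff:
    "h11 * a1 (Xv 1) = f1 1 \<and> h12 * a1 (Xv 1) = f2 1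
       \<and> h22 * a2 (Xv 2) = f2 2 - h12 * a1 (Xv 2)
       \<longleftrightarrow> h11 = g11 \<and> h12 = g12 \<and> h22 = g22" for h11 h12 h22
    using G1[of 1] G2[of 1] G2[of 2] by auto
  show ?thesis
    unfolding defining_eqs_iff using cong_F0_d0_quadratic[OF env G1 G2]
    by (auto intro!: ex1I[of _ "(g11, g12, g22)"])
qed

end
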